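(* Let $q=2^m$, let $k\in\mathbb{F}_q$ with $Tr(k)=1$, let $i\in\mathbb{F}_{q^2}\setminus\mathbb{F}_q$ with $i^2=i+k$, and let $\alpha=A+iB$, $\beta=C+iD$ with $A,B,C,D\in\mathbb{F}_q$ and $\alpha\beta\neq 0$. Then the following are equivalent: (i) $A=\xi^2+\xi$, $B=D=0$, $C=\xi^2$ for some $\xi\in\mathbb{F}_q\setminus\{0,1\}$ with $Tr(\xi/(\xi+1))=0$; (ii) $\beta(1+\alpha^{q+1}+\beta^{q+1})+\alpha^{2q}=0$, $\beta^{q+1}\neq 1$, $Tr\left(\frac{\beta^{q+1}}{\alpha^{q+1}}\right)=0$, and $\beta\in\mathbb{F}_q$.
   Context: $Tr:\mathbb{F}_q\to\mathbb{F}_2$ is the absolute trace $Tr(z)=z+z^2+\cdots+z^{2^{m-1}}$. *)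

theory Defs
  imports Main
begin

text \<open>We work inside a finite field of type 'a with CARD('a) = q^2, q = 2^m,
 playing the role of F_{q^2}. The subfield F_q is the set of fixed points of
 the Frobenius x \<mapsto> x^q.\<close>

definition subfield_q :: "nat \<Rightarrow> 'a::field set" where
  "subfield_q m = {x. x ^ (2 ^ m) = x}"

definition abs_trace :: "nat \<Rightarrow> 'a::field \<Rightarrow> 'a" where
  "abs_trace m z = (\<Sum>j<m. z ^ (2 ^ j))"

end

theory Submission
  imports Defs "HOL-Number_Theory.Residues"
begin

(* The field has characteristic 2, so x \<mapsto> x^q is an involutive field automorphism
   with fixed field F_q and squaring is injective. If \<beta> \<in> F_q then D = 0, and the
   equation exhibits \<alpha>^(2q) as an element of F_q; applying the Frobenius once more
   gives \<alpha>^2 = (\<alpha>^q)^2, hence \<alpha> \<in> F_q and B = 0. Over F_q the equation factors as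
   (A^2 + C + C^2)(1 + C) = 0, so C \<noteq> 1 means A = \<xi>^2 + \<xi> for the square root \<xi> of C,
   and Tr(C^2/A^2) = Tr(C/A) = Tr(\<xi>/(\<xi>+1)). *)

(* The library's finite_field_power_card_eq_same needs the sort finite_field,
   which a type variable of sort {field, finite} does not carry. *)
lemma power_card_eq_self:
  fixes x :: "'a::{field,finite}"
  shows "x ^ card (UNIV :: 'a set) = x"
proof (cases "x = 0")
  case False
  let ?U = "UNIV - {0 :: 'a}"
  have "bij_betw ((*) x) ?U ?U"
    unfolding bij_betw_def inj_on_def using False
    by (auto intro!: image_eqI[where x="_ / x"] simp: field_simps)
  then have "x ^ card ?U * (\<Prod>y\<in>?U. y) = 1 * (\<Prod>y\<in>?U. y)"
    using prod.reindex_bij_betw[of "(*) x" ?U ?U "\<lambda>y. y"] by (simp add: prod.distrib)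
  then have "x ^ card ?U = 1"
    by (subst (asm) mult_cancel_right) simp
  moreover have "card (UNIV :: 'a set) = Suc (card ?U)"
    by (rule card.remove) simp_all
  ultimately show ?thesis
    by (metis power_Suc mult_1_right)
qed (use finite_UNIV_card_ge_0[where 'a='a] in simp)

lemma CHAR_eq_prime_if_card_eq_power:
  assumes "prime p" and "card (UNIV :: 'a::{idom,finite} set) = p ^ n"
  shows "CHAR('a) = p"
proof -
  have "prime CHAR('a)"
    by (simp add: finite_imp_CHAR_pos prime_CHAR_semidom)
  moreover have "CHAR('a) dvd p ^ n"
    using CHAR_dvd_CARD[where 'a='a] assms(2) by simp
  ultimately have "CHAR('a) dvd p"
    using prime_dvd_power by blast
  then show ?thesis
    using assms(1) \<open>prime CHAR('a)\<close> primes_dvd_imp_eq by blast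
qed

lemma char2_eq_iff_add_eq_0:
  assumes "CHAR('a::ring_1) = 2"
  shows "x + y = 0 \<longleftrightarrow> x = (y :: 'a)"
  using uminus_CHAR_2[OF assms] by (metis add_eq_0_iff)

lemma char2_power2_eq_iff:
  assumes "CHAR('a::idom) = 2"
  shows "x ^ 2 = y ^ 2 \<longleftrightarrow> x = (y :: 'a)"
  using uminus_CHAR_2[OF assms] by (metis power2_eq_iff)

lemma char2_frobenius_add:
  assumes "CHAR('a::comm_semiring_1) = 2"
  shows "(x + y :: 'a) ^ (2 ^ n) = x ^ (2 ^ n) + y ^ (2 ^ n)"
  by (rule freshmans_dream') (simp_all add: assms)

lemma char2_power2_add:
  assumes "CHAR('a::comm_semiring_1) = 2"
  shows "(x + y :: 'a) ^ 2 = x ^ 2 + y ^ 2"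
  using char2_frobenius_add[OF assms, of x y 1] by simp

lemma abs_trace_power2:
  assumes "z ^ (2 ^ m) = z"
  shows "abs_trace m (z ^ 2) = abs_trace m z"
proof -
  have "abs_trace m z + z ^ 2 ^ m = (\<Sum>j<Suc m. z ^ 2 ^ j)"
    by (simp add: abs_trace_def)
  also have "\<dots> = z + abs_trace m (z ^ 2)"
    unfolding abs_trace_def by (subst sum.lessThan_Suc_shift) (simp add: power_mult [symmetric])
  finally show ?thesis
    using assms by (simp add: add.commute)
qed

lemma frobenius_fixed_imp_coordinate_zero:
  fixes i X Y :: "'a::field"
  assumes "CHAR('a) = 2" and "i ^ (2 ^ m) \<noteq> i"
    and "X ^ (2 ^ m) = X" and "Y ^ (2 ^ m) = Y" and "(X + i * Y) ^ (2 ^ m) = X + i * Y"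
  shows "Y = 0"
proof -
  have "(i ^ (2 ^ m) - i) * Y = 0"
    using assms(3-5) char2_frobenius_add[OF assms(1)]
    by (simp add: power_mult_distrib algebra_simps)
  then show ?thesis
    using assms(2) by simp
qed

lemma frobenius_fixed_if_frobenius_square_fixed:
  fixes x :: "'a::idom"
  assumes "CHAR('a) = 2" and "x ^ (q * q) = x" and "(x ^ (2 * q)) ^ q = x ^ (2 * q)"
  shows "x ^ q = x"
proof -
  have "(x ^ q) ^ 2 = (x ^ (q * q)) ^ 2"
    using assms(3) by (simp flip: power_mult add: ac_simps)
  then show ?thesis
    using assms(2) char2_power2_eq_iff[OF assms(1)] by simp
qed

lemma char2_factor_equation:
  fixes A C :: "'a::comm_ring_1"
  assumes "CHAR('a) = 2"
  shows "C * (1 + A^2 + C^2) + A^2 = (A^2 + C + C^2) * (1 + C)"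
proof -
  have "(2::'a) = 0"
    by (metis assms of_nat_CHAR of_nat_numeral)
  moreover have "(A^2 + C + C^2) * (1 + C) = C * (1 + A^2 + C^2) + A^2 + 2 * C^2"
    by (simp add: algebra_simps power2_eq_square power3_eq_cube)
  ultimately show ?thesis
    by simp
qed

lemma char2_equation_iff:
  fixes A C :: "'a::field"
  assumes "CHAR('a) = 2" and "C \<noteq> 1"
  shows "C * (1 + A^2 + C^2) + A^2 = 0 \<longleftrightarrow> A^2 = C + C^2"
proof -
  have "1 + C \<noteq> 0"
    using assms by (simp add: char2_eq_iff_add_eq_0)
  then have "C * (1 + A^2 + C^2) + A^2 = 0 \<longleftrightarrow> A^2 + C + C^2 = 0"
    using assms(1) by (simp add: char2_factor_equation)
  also have "\<dots> \<longleftrightarrow> A^2 = C + C^2"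
    using char2_eq_iff_add_eq_0[OF assms(1), of "A^2" "C + C^2"] by (simp add: add.assoc)
  finally show ?thesis .
qed

lemma sqrt_of_frobenius_fixed:
  fixes x :: "'a::monoid_mult"
  assumes "x ^ (2 ^ Suc n) = x"
  shows "(x ^ (2 ^ n)) ^ 2 = x" and "(x ^ (2 ^ n)) ^ (2 ^ Suc n) = x ^ (2 ^ n)"
proof -
  show "(x ^ (2 ^ n)) ^ 2 = x"
    using assms by (simp only: power_mult [symmetric] power_Suc2)
  have "(x ^ (2 ^ n)) ^ (2 ^ Suc n) = (x ^ (2 ^ Suc n)) ^ (2 ^ n)"
    by (simp only: power_mult [symmetric] mult.commute)
  then show "(x ^ (2 ^ n)) ^ (2 ^ Suc n) = x ^ (2 ^ n)"
    using assms by simp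
qed

lemma char2_artin_schreier_iff:
  fixes A C :: "'a::field"
  assumes "CHAR('a) = 2" and "0 < m" and "C ^ (2 ^ m) = C"
  shows "(\<exists>\<xi>. \<xi> ^ (2 ^ m) = \<xi> \<and> \<xi> \<noteq> 0 \<and> \<xi> \<noteq> 1 \<and> A = \<xi>^2 + \<xi> \<and> C = \<xi>^2)
           \<longleftrightarrow> A^2 = C + C^2 \<and> C \<noteq> 0 \<and> C \<noteq> 1"
proof
  assume "\<exists>\<xi>. \<xi> ^ (2 ^ m) = \<xi> \<and> \<xi> \<noteq> 0 \<and> \<xi> \<noteq> 1 \<and> A = \<xi>^2 + \<xi> \<and> C = \<xi>^2"
  then obtain \<xi> where "\<xi> \<noteq> 0" "\<xi> \<noteq> 1" "A = \<xi>^2 + \<xi>" "C = \<xi>^2"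
    by blast
  moreover have "(\<xi>^2 + \<xi>)^2 = \<xi>^2 + (\<xi>^2)^2"
    using char2_power2_add[OF assms(1)] by (simp add: add.commute)
  ultimately show "A^2 = C + C^2 \<and> C \<noteq> 0 \<and> C \<noteq> 1"
    using char2_power2_eq_iff[OF assms(1), of \<xi> 1] by simp
next
  assume C: "A^2 = C + C^2 \<and> C \<noteq> 0 \<and> C \<noteq> 1"
  obtain n where m: "m = Suc n"
    using assms(2) gr0_implies_Suc by blast
  define \<xi> where "\<xi> = C ^ (2 ^ n)"
  have \<xi>: "\<xi>^2 = C" "\<xi> ^ (2 ^ m) = \<xi>"
    using sqrt_of_frobenius_fixed assms(3) unfolding \<xi>_def m by blast+
  have "A^2 = (\<xi>^2 + \<xi>)^2"
    using C \<xi>(1) char2_power2_add[OF assms(1)] by (simp add: add.commute)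
  then have "A = \<xi>^2 + \<xi>"
    using char2_power2_eq_iff[OF assms(1)] by blast
  then show "\<exists>\<xi>. \<xi> ^ (2 ^ m) = \<xi> \<and> \<xi> \<noteq> 0 \<and> \<xi> \<noteq> 1 \<and> A = \<xi>^2 + \<xi> \<and> C = \<xi>^2"
    using C \<xi> by force
qed

lemma char2_abs_trace_ratio:
  fixes \<xi> :: "'a::field"
  assumes "CHAR('a) = 2" and "\<xi> ^ (2 ^ m) = \<xi>" and "\<xi> \<noteq> 0"
  shows "abs_trace m ((\<xi>^2)^2 / (\<xi>^2 + \<xi>)^2) = abs_trace m (\<xi> / (\<xi> + 1))"
proof -
  have "\<xi>^2 + \<xi> = \<xi> * (\<xi> + 1)"
    by (simp add: algebra_simps power2_eq_square)
  then have "(\<xi>^2)^2 / (\<xi>^2 + \<xi>)^2 = (\<xi> / (\<xi> + 1))^2"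
    using assms(3) by (simp add: power2_eq_square)
  moreover have "(\<xi> / (\<xi> + 1)) ^ (2 ^ m) = \<xi> / (\<xi> + 1)"
    using assms(2) by (simp add: power_divide char2_frobenius_add[OF assms(1)])
  ultimately show ?thesis
    by (simp only: abs_trace_power2)
qed

lemma char2_equation_over_subfield_iff:
  fixes A C :: "'a::field"
  assumes "CHAR('a) = 2" and "0 < m" and "C ^ (2 ^ m) = C" and "C \<noteq> 0"
  shows "(\<exists>\<xi>. \<xi> ^ (2 ^ m) = \<xi> \<and> \<xi> \<noteq> 0 \<and> \<xi> \<noteq> 1 \<and> abs_trace m (\<xi> / (\<xi> + 1)) = 0 \<and>
            A = \<xi>^2 + \<xi> \<and> C = \<xi>^2)
         \<longleftrightarrow> C * (1 + A^2 + C^2) + A^2 = 0 \<and> C^2 \<noteq> 1 \<and> abs_trace m (C^2 / A^2) = 0"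
    (is "?lhs \<longleftrightarrow> ?rhs")
proof -
  have "?rhs \<longleftrightarrow> (A^2 = C + C^2 \<and> C \<noteq> 0 \<and> C \<noteq> 1) \<and> abs_trace m (C^2 / A^2) = 0"
    using char2_equation_iff[OF assms(1)] char2_power2_eq_iff[OF assms(1), of C 1] assms(4)
    by auto
  also have "\<dots> \<longleftrightarrow> (\<exists>\<xi>. \<xi> ^ (2 ^ m) = \<xi> \<and> \<xi> \<noteq> 0 \<and> \<xi> \<noteq> 1 \<and> A = \<xi>^2 + \<xi> \<and> C = \<xi>^2)
                        \<and> abs_trace m (C^2 / A^2) = 0"
    using char2_artin_schreier_iff[OF assms(1-3)] by simp
  also have "\<dots> \<longleftrightarrow> ?lhs"
    using char2_abs_trace_ratio[OF assms(1)] by auto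
  finally show ?thesis ..
qed

lemma equation_imp_coordinates_zero:
  fixes i A B C D :: "'a::field"
  assumes char: "CHAR('a) = 2" and inv: "\<And>x::'a. x ^ (2 ^ m * 2 ^ m) = x"
    and i: "i ^ (2 ^ m) \<noteq> i"
    and fixed: "A ^ (2 ^ m) = A" "B ^ (2 ^ m) = B" "C ^ (2 ^ m) = C" "D ^ (2 ^ m) = D"
    and \<beta>: "(C + i * D) ^ (2 ^ m) = C + i * D"
    and eq: "(C + i * D) * (1 + (A + i * B) ^ (2 ^ m + 1) + (C + i * D) ^ (2 ^ m + 1))
               + (A + i * B) ^ (2 * 2 ^ m) = 0"
  shows "B = 0 \<and> D = 0"
proof -
  let ?q = "2 ^ m :: nat"
  let ?\<alpha> = "A + i * B"
  have D: "D = 0"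
    using frobenius_fixed_imp_coordinate_zero[OF char i fixed(3,4) \<beta>] .
  define N where "N = ?\<alpha> ^ (?q + 1)"
  have "N ^ ?q = N"
    using inv[of ?\<alpha>] unfolding N_def by (simp add: power_add power_mult_distrib flip: power_mult)
  moreover have "(C ^ 2) ^ ?q = C ^ 2"
    using fixed(3) by (metis power_mult mult.commute)
  ultimately have "(C * (1 + N + C ^ 2)) ^ ?q = C * (1 + N + C ^ 2)"
    using fixed(3) by (simp add: power_mult_distrib char2_frobenius_add[OF char])
  moreover have "?\<alpha> ^ (2 * ?q) = C * (1 + N + C ^ 2)"
    using eq D fixed(3) char2_eq_iff_add_eq_0[OF char] unfolding N_def
    by (simp add: power_add power2_eq_square add.commute)
  ultimately have "?\<alpha> ^ ?q = ?\<alpha>"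
    using frobenius_fixed_if_frobenius_square_fixed[OF char inv] by simp
  then have "B = 0"
    using frobenius_fixed_imp_coordinate_zero[OF char i fixed(1,2)] by blast
  with D show ?thesis
    by simp
qed

theorem proposition2:
  fixes m :: nat and k i A B C D :: "'a::{field,finite}"
  assumes card: "card (UNIV :: 'a set) = (2 ^ m) ^ 2"
    and k: "k \<in> subfield_q m" and trk: "abs_trace m k = 1"
    and i: "i \<notin> subfield_q m" and i2: "i ^ 2 = i + k"
    and ABCD: "A \<in> subfield_q m" "B \<in> subfield_q m" "C \<in> subfield_q m" "D \<in> subfield_q m"
    and nz: "(A + i * B) * (C + i * D) \<noteq> 0"
  shows "(\<exists>\<xi>\<in>subfield_q m. \<xi> \<noteq> 0 \<and> \<xi> \<noteq> 1 \<and> abs_trace m (\<xi> / (\<xi> + 1)) = 0 \<and>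
            A = \<xi>^2 + \<xi> \<and> B = 0 \<and> D = 0 \<and> C = \<xi>^2)
     \<longleftrightarrow>
     (let \<alpha> = A + i * B; \<beta> = C + i * D; q = 2 ^ m in
        \<beta> * (1 + \<alpha> ^ (q + 1) + \<beta> ^ (q + 1)) + \<alpha> ^ (2 * q) = 0 \<and>
        \<beta> ^ (q + 1) \<noteq> 1 \<and>
        abs_trace m (\<beta> ^ (q + 1) / \<alpha> ^ (q + 1)) = 0 \<and>
        \<beta> \<in> subfield_q m)"
proof -
  have char: "CHAR('a) = 2"
    using card by (intro CHAR_eq_prime_if_card_eq_power[of 2 "m * 2"]) (simp_all add: power_mult)
  have "0 < m"
    using CHAR_dvd_CARD[where 'a='a] card char by (cases m) simp_all
  have inv: "x ^ (2 ^ m * 2 ^ m) = x" for x :: 'a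
    using power_card_eq_self[of x] card by (simp add: power2_eq_square)
  have fixed: "x \<in> subfield_q m \<longleftrightarrow> x ^ 2 ^ m = x" for x :: 'a
    by (simp add: subfield_q_def)
  have power_fixed: "\<And>x :: 'a. x ^ 2 ^ m = x \<Longrightarrow> x ^ (2 ^ m + 1) = x ^ 2 \<and> x ^ (2 * 2 ^ m) = x ^ 2"
    by (metis power_add power_mult power2_eq_square power_one_right mult.commute)
  show ?thesis
  proof (cases "B = 0 \<and> D = 0")
    case True
    have "A ^ 2 ^ m = A" and "C ^ 2 ^ m = C" and "C \<noteq> 0"
      using ABCD fixed nz True by simp_all
    with True show ?thesis
      using char2_equation_over_subfield_iff[OF char \<open>0 < m\<close>, of C A] power_fixed fixed
      by (simp add: Let_def Bex_def)
  next
    case False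
    then show ?thesis
      using equation_imp_coordinates_zero[OF char inv, of i A B C D] i ABCD fixed
      by (auto simp: Let_def)
  qed
qed

end
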